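(* For all unitary distributions of closed abstractions $\big(\sum_{i=1}^n\alpha_i\cdot\lambda x.\vec t_i\big)\in\mathcal S$ and all types $A,B$: $\sum_{i=1}^n\alpha_i\cdot\lambda x.\vec t_i\in[\![A\Rightarrow B]\!]$ if and only if $\lambda x.\big(\sum_{i=1}^n\alpha_i\cdot\vec t_i\big)\in[\![A\rightarrow B]\!]$.
   Context: Calculus. Pure values $v::=x\mid\lambda x.\vec s\mid *\mid(v_1,v_2)\mid\mathtt{inl}(v)\mid\mathtt{inr}(v)$; pure terms add application $s\,t$, sequence $t;\vec s$, $\mathtt{let}\,(x_1,x_2)=t\,\mathtt{in}\,\vec s$ and $\mathtt{match}\,t\{\mathtt{inl}\,x_1\mapsto\vec s_1\mid\mathtt{inr}\,x_2\mapsto\vec s_2\}$; term distributions are formal expressions $\vec 0\mid t\mid\vec s+\vec t\mid\alpha\cdot\vec t$ ($\alpha\in\mathbb C$), taken at top level modulo the weak-vector-space congruence (which never acts inside pure terms, e.g. inside an abstraction body, and does not identify $0\cdot t$ with $\vec 0$); canonical form $\sum_i\alpha_it_i$ with distinct $t_i$. Bilinear substitution $\vec t\langle x:=\vec w\rangle=\sum_j\beta_j\vec t[x:=w_j]$ for $\vec w=\sum_j\beta_jw_j$. Evaluation $\succ^*$ is the reflexive-transitive closure of one-step evaluation $\alpha\cdot s+\vec r\succ\alpha\cdot\vec s'+\vec r$ whenever $s\triangleright\vec s'$, where $\triangleright$ is call-by-value atomic evaluation ($(\lambda x.\vec t)v\triangleright\vec t[x:=v]$, $*;\vec s\triangleright\vec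 s$, let/match on value constructors, and closure rules under the evaluated positions). Semantics. $\mathcal S$ is the set of closed value distributions of $\ell_2$-norm $1$, where for canonical forms $\|\sum_i\alpha_iv_i\|^2=\sum_i|\alpha_i|^2$. Types are given by a set $[\![A]\!]\subseteq\mathcal S$; $\vec t\Vdash A$ iff $\vec t\succ^*\vec v$ for some $\vec v\in[\![A]\!]$. $[\![A\rightarrow B]\!]=\{\lambda x.\vec t\ \text{closed}:\forall\vec v\in[\![A]\!],\ \vec t\langle x:=\vec v\rangle\Vdash B\}$ and $[\![A\Rightarrow B]\!]=\{(\sum_{i=1}^n\alpha_i\cdot\lambda x.\vec t_i)\in\mathcal S:\forall\vec v\in[\![A]\!],\ (\sum_i\alpha_i\cdot\vec t_i\langle x:=\vec v\rangle)\Vdash B\}$. *)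

theory Defs
  imports Complex_Main
begin

text \<open>Inside pure terms the distributions are kept as formal expressions.
  Binding: VLam binds index 0; TLet binds x1 as index 1 and x2 as index 0;
  each TMatch branch binds index 0.\<close>

datatype val =
    VVar nat
  | VLam dist
  | VUnit
  | VPair val val
  | VInl val
  | VInr val
and trm =
    TVal val
  | TApp trm trm
  | TSeq trm dist
  | TLet trm dist
  | TMatch trm dist dist
and dist =
    DZero
  | DTrm trm
  | DPlus dist dist
  | DScal complex dist

primrec closed_v :: "nat \<Rightarrow> val \<Rightarrow> bool"
  and closed_t :: "nat \<Rightarrow> trm \<Rightarrow> bool"
  and closed_d :: "nat \<Rightarrow> dist \<Rightarrow> bool" where
  "closed_v k (VVar n) = (n < k)"
| "closed_v k (VLam d) = closed_d (Suc k) d"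
| "closed_v k VUnit = True"
| "closed_v k (VPair v w) = (closed_v k v \<and> closed_v k w)"
| "closed_v k (VInl v) = closed_v k v"
| "closed_v k (VInr v) = closed_v k v"
| "closed_t k (TVal v) = closed_v k v"
| "closed_t k (TApp s t) = (closed_t k s \<and> closed_t k t)"
| "closed_t k (TSeq t d) = (closed_t k t \<and> closed_d k d)"
| "closed_t k (TLet t d) = (closed_t k t \<and> closed_d (k + 2) d)"
| "closed_t k (TMatch t d1 d2) = (closed_t k t \<and> closed_d (Suc k) d1 \<and> closed_d (Suc k) d2)"
| "closed_d k DZero = True"
| "closed_d k (DTrm t) = closed_t k t"
| "closed_d k (DPlus d e) = (closed_d k d \<and> closed_d k e)"
| "closed_d k (DScal a d) = closed_d k d"

text \<open>Substitution of a (closed) value for the index k; only closed values are ever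
  substituted, so no lifting is needed.\<close>

primrec subst_v :: "nat \<Rightarrow> val \<Rightarrow> val \<Rightarrow> val"
  and subst_t :: "nat \<Rightarrow> val \<Rightarrow> trm \<Rightarrow> trm"
  and subst_d :: "nat \<Rightarrow> val \<Rightarrow> dist \<Rightarrow> dist" where
  "subst_v k w (VVar n) = (if n = k then w else if k < n then VVar (n - 1) else VVar n)"
| "subst_v k w (VLam d) = VLam (subst_d (Suc k) w d)"
| "subst_v k w VUnit = VUnit"
| "subst_v k w (VPair v1 v2) = VPair (subst_v k w v1) (subst_v k w v2)"
| "subst_v k w (VInl v) = VInl (subst_v k w v)"
| "subst_v k w (VInr v) = VInr (subst_v k w v)"
| "subst_t k w (TVal v) = TVal (subst_v k w v)"
| "subst_t k w (TApp s t) = TApp (subst_t k w s) (subst_t k w t)"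
| "subst_t k w (TSeq t d) = TSeq (subst_t k w t) (subst_d k w d)"
| "subst_t k w (TLet t d) = TLet (subst_t k w t) (subst_d (k + 2) w d)"
| "subst_t k w (TMatch t d1 d2) = TMatch (subst_t k w t) (subst_d (Suc k) w d1) (subst_d (Suc k) w d2)"
| "subst_d k w DZero = DZero"
| "subst_d k w (DTrm t) = DTrm (subst_t k w t)"
| "subst_d k w (DPlus d e) = DPlus (subst_d k w d) (subst_d k w e)"
| "subst_d k w (DScal a d) = DScal a (subst_d k w d)"

text \<open>A top-level term distribution in canonical form \<open>\<Sum>i \<alpha>i t_i\<close> (distinct t_i,
  coefficients possibly 0, since 0\<cdot>t is not identified with the zero distribution)
  is a finite partial map from pure terms to coefficients.\<close>

type_synonym cdist = "trm \<Rightarrow> complex option"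

definition madd :: "cdist \<Rightarrow> cdist \<Rightarrow> cdist" where
  "madd f g = (\<lambda>u. case f u of None \<Rightarrow> g u
      | Some a \<Rightarrow> (case g u of None \<Rightarrow> Some a | Some b \<Rightarrow> Some (a + b)))"

definition mscale :: "complex \<Rightarrow> cdist \<Rightarrow> cdist" where
  "mscale a f = (\<lambda>u. map_option (\<lambda>b. a * b) (f u))"

definition msumset :: "'i set \<Rightarrow> ('i \<Rightarrow> complex) \<Rightarrow> ('i \<Rightarrow> cdist) \<Rightarrow> cdist" where
  "msumset I c F = (\<lambda>u. if (\<exists>i\<in>I. u \<in> dom (F i))
      then Some (\<Sum>i\<in>{i\<in>I. u \<in> dom (F i)}. c i * the (F i u)) else None)"

definition mapd :: "(trm \<Rightarrow> trm) \<Rightarrow> cdist \<Rightarrow> cdist" where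
  "mapd g T = msumset (dom T) (\<lambda>t. the (T t)) (\<lambda>t. [g t \<mapsto> 1])"

primrec cls :: "dist \<Rightarrow> cdist" where
  "cls DZero = Map.empty"
| "cls (DTrm t) = [t \<mapsto> 1]"
| "cls (DPlus d e) = madd (cls d) (cls e)"
| "cls (DScal a d) = mscale a (cls d)"

definition bsubst :: "cdist \<Rightarrow> cdist \<Rightarrow> cdist" where
  "bsubst T W = msumset (dom W) (\<lambda>u. the (W u))
     (\<lambda>u. case u of TVal w \<Rightarrow> mapd (subst_t 0 w) T | _ \<Rightarrow> Map.empty)"

inductive atomic :: "trm \<Rightarrow> cdist \<Rightarrow> bool" where
  beta: "atomic (TApp (TVal (VLam d)) (TVal v)) (cls (subst_d 0 v d))"
| seq: "atomic (TSeq (TVal VUnit) d) (cls d)"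
| lett: "atomic (TLet (TVal (VPair v1 v2)) d) (cls (subst_d 0 v1 (subst_d 0 v2 d)))"
| match_inl: "atomic (TMatch (TVal (VInl v)) d1 d2) (cls (subst_d 0 v d1))"
| match_inr: "atomic (TMatch (TVal (VInr v)) d1 d2) (cls (subst_d 0 v d2))"
| app_arg: "atomic t T \<Longrightarrow> atomic (TApp s t) (mapd (TApp s) T)"
| app_fun: "atomic s S \<Longrightarrow> atomic (TApp s (TVal v)) (mapd (\<lambda>u. TApp u (TVal v)) S)"
| seq_ctx: "atomic t T \<Longrightarrow> atomic (TSeq t d) (mapd (\<lambda>u. TSeq u d) T)"
| let_ctx: "atomic t T \<Longrightarrow> atomic (TLet t d) (mapd (\<lambda>u. TLet u d) T)"
| match_ctx: "atomic t T \<Longrightarrow> atomic (TMatch t d1 d2) (mapd (\<lambda>u. TMatch u d1 d2) T)"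

definition step :: "cdist \<Rightarrow> cdist \<Rightarrow> bool" where
  "step D D' = (\<exists>a s S' r. finite (dom r) \<and> atomic s S' \<and>
      D = madd [s \<mapsto> a] r \<and> D' = madd (mscale a S') r)"

definition unit_sphere :: "cdist set" where
  "unit_sphere = {D. finite (dom D) \<and> dom D \<subseteq> {TVal v |v. closed_v 0 v} \<and>
      (\<Sum>u\<in>dom D. (cmod (the (D u)))\<^sup>2) = 1}"

definition realizes :: "cdist \<Rightarrow> cdist set \<Rightarrow> bool" where
  "realizes D A = (\<exists>V. step\<^sup>*\<^sup>* D V \<and> V \<in> A)"

definition arrow :: "cdist set \<Rightarrow> cdist set \<Rightarrow> cdist set" where
  "arrow A B = {D. \<exists>d. D = [TVal (VLam d) \<mapsto> 1] \<and> closed_v 0 (VLam d) \<and>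
      (\<forall>V\<in>A. realizes (bsubst (cls d) V) B)}"

definition darrow :: "cdist set \<Rightarrow> cdist set \<Rightarrow> cdist set" where
  "darrow A B = {D \<in> unit_sphere. dom D \<subseteq> {TVal (VLam d) |d. True} \<and>
      (\<forall>V\<in>A. realizes (msumset (dom D) (\<lambda>u. the (D u))
          (\<lambda>u. case u of TVal (VLam d) \<Rightarrow> bsubst (cls d) V | _ \<Rightarrow> Map.empty)) B)}"

fun fsum :: "(complex \<times> dist) list \<Rightarrow> dist" where
  "fsum [] = DZero"
| "fsum [(a, d)] = DScal a d"
| "fsum ((a, d) # xs) = DPlus (DScal a d) (fsum xs)"

end

theory Submission
  imports Defs
begin

text \<open>Both memberships amount to: for every \<open>V \<in> A\<close>, \<open>(\<Sum>i \<alpha>\<^sub>i\<cdot>t\<^sub>i)\<langle>x:=V\<rangle>\<close> realizes \<open>B\<close>.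
  For \<open>[[A \<rightarrow> B]]\<close> this is the definition; for \<open>[[A \<Rightarrow> B]]\<close> the definition speaks of
  \<open>\<Sum>i \<alpha>\<^sub>i\<cdot>t\<^sub>i\<langle>x:=V\<rangle>\<close>, which is the same distribution because \<open>T \<mapsto> T\<langle>x:=V\<rangle>\<close> is
  linear on canonical forms and every linear map commutes with taking the canonical form
  of a formal sum.\<close>

definition mcoeff :: "cdist \<Rightarrow> trm \<Rightarrow> complex" where
  "mcoeff f u = (case f u of None \<Rightarrow> 0 | Some a \<Rightarrow> a)"

lemma cdist_eqI:
  assumes "dom f = dom g" and "\<And>u. mcoeff f u = mcoeff g u"
  shows "f = g"
proof
  fix u
  show "f u = g u"
    using assms(1) assms(2)[of u] by (cases "f u"; cases "g u") (auto simp: mcoeff_def)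
qed

lemma mcoeff_notin_dom: "u \<notin> dom f \<Longrightarrow> mcoeff f u = 0"
  by (simp add: mcoeff_def domIff)

lemma the_eq_mcoeff: "u \<in> dom f \<Longrightarrow> the (f u) = mcoeff f u"
  by (auto simp: mcoeff_def)

lemma mcoeff_singleton [simp]: "mcoeff [t \<mapsto> a] u = (if u = t then a else 0)"
  by (simp add: mcoeff_def)

lemma dom_madd [simp]: "dom (madd f g) = dom f \<union> dom g"
  by (auto simp: madd_def split: option.splits)

lemma mcoeff_madd [simp]: "mcoeff (madd f g) u = mcoeff f u + mcoeff g u"
  by (auto simp: madd_def mcoeff_def split: option.splits)

lemma dom_mscale [simp]: "dom (mscale a f) = dom f"
  by (auto simp: mscale_def)

lemma mcoeff_mscale [simp]: "mcoeff (mscale a f) u = a * mcoeff f u"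
  by (auto simp: mscale_def mcoeff_def split: option.splits)

lemma dom_msumset [simp]: "dom (msumset I c F) = (\<Union>i\<in>I. dom (F i))"
  by (auto simp: msumset_def domIff split: if_splits; blast)

lemma mcoeff_msumset [simp]:
  assumes "finite I"
  shows "mcoeff (msumset I c F) u = (\<Sum>i\<in>I. c i * mcoeff (F i) u)"
proof (cases "\<exists>i\<in>I. u \<in> dom (F i)")
  case True
  have "(\<Sum>i | i \<in> I \<and> u \<in> dom (F i). c i * the (F i u))
      = (\<Sum>i | i \<in> I \<and> u \<in> dom (F i). c i * mcoeff (F i) u)"
    by (rule sum.cong) (auto simp: the_eq_mcoeff)
  also have "\<dots> = (\<Sum>i\<in>I. c i * mcoeff (F i) u)"
    by (rule sum.mono_neutral_left) (auto simp: assms mcoeff_notin_dom)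
  finally show ?thesis
    using True by (simp add: msumset_def mcoeff_def)
next
  case False
  then have "\<forall>i\<in>I. mcoeff (F i) u = 0"
    using mcoeff_notin_dom by blast
  with False show ?thesis
    by (simp add: msumset_def mcoeff_def)
qed

lemma finite_dom_cls: "finite (dom (cls d))"
  by (induction d rule: dist.induct[where ?P1.0 = "\<lambda>_. True" and ?P2.0 = "\<lambda>_. True"])
     (auto simp: dom_if)

text \<open>Preservation of the empty distribution does not follow from homogeneity, because
  \<open>mscale 0\<close> keeps the support (\<open>0\<cdot>t\<close> is not identified with \<open>0\<close>).\<close>

definition cdist_linear :: "(cdist \<Rightarrow> cdist) \<Rightarrow> bool" where
  "cdist_linear f \<longleftrightarrow> f Map.empty = Map.empty
     \<and> (\<forall>a T. finite (dom T) \<longrightarrow> f (mscale a T) = mscale a (f T))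
     \<and> (\<forall>T1 T2. finite (dom T1) \<longrightarrow> finite (dom T2) \<longrightarrow> f (madd T1 T2) = madd (f T1) (f T2))"

lemma cdist_linearD:
  assumes "cdist_linear f"
  shows "f Map.empty = Map.empty"
    and "finite (dom T) \<Longrightarrow> f (mscale a T) = mscale a (f T)"
    and "finite (dom T1) \<Longrightarrow> finite (dom T2) \<Longrightarrow> f (madd T1 T2) = madd (f T1) (f T2)"
  using assms by (auto simp: cdist_linear_def)

text \<open>The linear extension of \<open>H\<close>; both \<open>mapd\<close> and the sum in \<open>darrow\<close> are instances.\<close>

definition mbind :: "cdist \<Rightarrow> (trm \<Rightarrow> cdist) \<Rightarrow> cdist" where
  "mbind D H = msumset (dom D) (\<lambda>u. the (D u)) H"

lemma dom_mbind: "dom (mbind D H) = (\<Union>u\<in>dom D. dom (H u))"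
  by (simp add: mbind_def)

lemma mcoeff_mbind:
  assumes "finite (dom D)"
  shows "mcoeff (mbind D H) t = (\<Sum>u\<in>dom D. mcoeff D u * mcoeff (H u) t)"
  using assms by (auto simp: mbind_def the_eq_mcoeff intro: sum.cong)

lemma mbind_singleton: "mbind [t \<mapsto> 1] H = H t"
  by (rule cdist_eqI) (simp_all add: dom_mbind mcoeff_mbind)

lemma sum_mcoeff_superset:
  assumes "finite S" and "dom D \<subseteq> S"
  shows "(\<Sum>u\<in>S. mcoeff D u * X u) = (\<Sum>u\<in>dom D. mcoeff D u * X u)"
  by (rule sum.mono_neutral_right) (auto simp: assms mcoeff_notin_dom)

lemma mbind_madd:
  assumes "finite (dom D1)" and "finite (dom D2)"
  shows "mbind (madd D1 D2) H = madd (mbind D1 H) (mbind D2 H)"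
proof (rule cdist_eqI)
  fix t
  let ?S = "dom D1 \<union> dom D2"
  have "mcoeff (mbind (madd D1 D2) H) t
      = (\<Sum>u\<in>?S. mcoeff D1 u * mcoeff (H u) t) + (\<Sum>u\<in>?S. mcoeff D2 u * mcoeff (H u) t)"
    using assms by (simp add: mcoeff_mbind algebra_simps sum.distrib)
  also have "\<dots> = mcoeff (madd (mbind D1 H) (mbind D2 H)) t"
    using assms sum_mcoeff_superset[of ?S D1 "\<lambda>u. mcoeff (H u) t"]
      sum_mcoeff_superset[of ?S D2 "\<lambda>u. mcoeff (H u) t"]
    by (simp add: mcoeff_mbind)
  finally show "mcoeff (mbind (madd D1 D2) H) t = mcoeff (madd (mbind D1 H) (mbind D2 H)) t" .
qed (simp add: dom_mbind)

lemma mbind_mscale: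
  assumes "finite (dom D)"
  shows "mbind (mscale a D) H = mscale a (mbind D H)"
  by (rule cdist_eqI) (simp_all add: assms dom_mbind mcoeff_mbind sum_distrib_left algebra_simps)

lemma cdist_linear_mbind: "cdist_linear (\<lambda>D. mbind D H)"
  by (simp add: cdist_linear_def mbind_madd mbind_mscale) (simp add: mbind_def msumset_def)

lemma cdist_linear_mapd: "cdist_linear (mapd g)"
  using cdist_linear_mbind[of "\<lambda>t. [g t \<mapsto> 1]"] by (simp add: mapd_def[abs_def] mbind_def)

lemma cdist_linear_empty: "cdist_linear (\<lambda>_. Map.empty)"
  by (simp add: cdist_linear_def madd_def mscale_def)

lemma cdist_linear_msumset:
  assumes "finite I" and lin: "\<And>i. i \<in> I \<Longrightarrow> cdist_linear (F i)"
  shows "cdist_linear (\<lambda>T. msumset I c (\<lambda>i. F i T))"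
  unfolding cdist_linear_def
proof (intro conjI allI impI)
  show "msumset I c (\<lambda>i. F i Map.empty) = Map.empty"
    using cdist_linearD(1)[OF lin] by (simp add: msumset_def)
next
  fix a and T :: cdist
  assume "finite (dom T)"
  then show "msumset I c (\<lambda>i. F i (mscale a T)) = mscale a (msumset I c (\<lambda>i. F i T))"
    by (intro cdist_eqI)
       (simp_all add: assms(1) cdist_linearD(2)[OF lin] sum_distrib_left algebra_simps)
next
  fix T1 T2 :: cdist
  assume "finite (dom T1)" and "finite (dom T2)"
  then show "msumset I c (\<lambda>i. F i (madd T1 T2))
      = madd (msumset I c (\<lambda>i. F i T1)) (msumset I c (\<lambda>i. F i T2))"
    by (intro cdist_eqI)
       (auto simp: assms(1) cdist_linearD(3)[OF lin] sum.distrib algebra_simps)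
qed

lemma cdist_linear_bsubst:
  assumes "finite (dom V)"
  shows "cdist_linear (\<lambda>T. bsubst T V)"
proof -
  define F where "F u = (case u of TVal w \<Rightarrow> mapd (subst_t 0 w) | _ \<Rightarrow> (\<lambda>_. Map.empty))" for u
  have "cdist_linear (F u)" for u
    by (cases u) (simp_all add: F_def cdist_linear_mapd cdist_linear_empty)
  moreover have "bsubst T V = msumset (dom V) (\<lambda>u. the (V u)) (\<lambda>u. F u T)" for T
    unfolding bsubst_def F_def by (rule arg_cong[where f = "msumset _ _"]) (auto split: trm.split)
  ultimately show ?thesis
    using cdist_linear_msumset[OF assms] by presburger
qed

lemma mbind_cls_fsum_lams:
  assumes "cdist_linear f"
  shows "mbind (cls (fsum (map (\<lambda>(a, d). (a, DTrm (TVal (VLam d)))) xs)))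
           (\<lambda>u. case u of TVal (VLam d) \<Rightarrow> f (cls d) | _ \<Rightarrow> Map.empty)
         = f (cls (fsum xs))"
proof (induction xs rule: fsum.induct)
  case 1
  show ?case
    using cdist_linearD(1)[OF assms] cdist_linearD(1)[OF cdist_linear_mbind] by simp
next
  case (2 a d)
  show ?case
    by (simp add: cdist_linearD(2)[OF assms] cdist_linearD(2)[OF cdist_linear_mbind]
        mbind_singleton finite_dom_cls)
next
  case (3 a d y ys)
  then show ?case
    by (simp add: cdist_linearD(2,3)[OF assms] cdist_linearD(2,3)[OF cdist_linear_mbind]
        mbind_singleton finite_dom_cls)
qed

lemma dom_cls_fsum_lams:
  "dom (cls (fsum (map (\<lambda>(a, d). (a, DTrm (TVal (VLam d)))) xs))) \<subseteq> {TVal (VLam d) |d. True}"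
  by (induction xs rule: fsum.induct) auto

lemma closed_fsum:
  "\<forall>(a, d) \<in> set xs. closed_v 0 (VLam d) \<Longrightarrow> closed_v 0 (VLam (fsum xs))"
  by (induction xs rule: fsum.induct) auto

lemma singleton_lam_in_arrow_iff:
  "[TVal (VLam d) \<mapsto> 1] \<in> arrow A B
     \<longleftrightarrow> closed_v 0 (VLam d) \<and> (\<forall>V\<in>A. realizes (bsubst (cls d) V) B)"
proof -
  have "[TVal (VLam d) \<mapsto> 1] = [TVal (VLam d') \<mapsto> (1::complex)] \<longleftrightarrow> d' = d" for d'
    by (auto dest: arg_cong[where f = dom])
  then show ?thesis
    by (auto simp: arrow_def)
qed

theorem proposition4:
  fixes xs :: "(complex \<times> dist) list" and A B :: "cdist set"
  assumes "A \<subseteq> unit_sphere" and "B \<subseteq> unit_sphere"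
    and "\<forall>(a, d) \<in> set xs. closed_v 0 (VLam d)"
    and "cls (fsum (map (\<lambda>(a, d). (a, DTrm (TVal (VLam d)))) xs)) \<in> unit_sphere"
  shows "cls (fsum (map (\<lambda>(a, d). (a, DTrm (TVal (VLam d)))) xs)) \<in> darrow A B
     \<longleftrightarrow> [TVal (VLam (fsum xs)) \<mapsto> 1] \<in> arrow A B"
proof -
  let ?D = "cls (fsum (map (\<lambda>(a, d). (a, DTrm (TVal (VLam d)))) xs))"
  have "mbind ?D (\<lambda>u. case u of TVal (VLam d) \<Rightarrow> bsubst (cls d) V | _ \<Rightarrow> Map.empty)
      = bsubst (cls (fsum xs)) V" if "V \<in> A" for V
  proof -
    have "finite (dom V)"
      using that assms(1) by (auto simp: unit_sphere_def)
    then show ?thesis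
      by (rule mbind_cls_fsum_lams[OF cdist_linear_bsubst])
  qed
  then have "?D \<in> darrow A B \<longleftrightarrow> (\<forall>V\<in>A. realizes (bsubst (cls (fsum xs)) V) B)"
    using assms(4) dom_cls_fsum_lams[of xs] by (auto simp: darrow_def mbind_def)
  then show ?thesis
    using closed_fsum[OF assms(3)] by (simp add: singleton_lam_in_arrow_iff)
qed

end
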